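(* Let $n\ge 1$ and let $B=\prod_{i=1}^n[a_i,b_i]\subseteq\mathbb{R}^n$ (with $a_i<b_i$) be an $n$-dimensional box, and let $V$ be its set of $2^n$ vertices. Let $0\le k<n$. Then there exists a (non-unique) subset $U\subseteq V$ with $|U|=\sum_{i=0}^k\binom{n}{i}$ such that $\deg(U\to v)=k$ for every $v\in V\setminus U$.
   Context: All polynomials are real polynomials in $n$ variables. For a set $S\subseteq\mathbb{R}^n$ and a point $t\in\mathbb{R}^n$, $\deg(S\to t)$ denotes the maximal integer $k$ such that every polynomial of degree at most $k$ which vanishes on every point of $S$ also vanishes at $t$ (equivalently, the values of any polynomial of degree at most $k$ on $S$ determine its value at $t$). *)

theory Defs
  imports "HOL-Analysis.Analysis"
begin

definition monoms :: "nat \<Rightarrow> ('n::finite \<Rightarrow> nat) set" where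
  "monoms k = {\<alpha>. (\<Sum>i\<in>UNIV. \<alpha> i) \<le> k}"

definition poly_deg_le :: "nat \<Rightarrow> (real^'n::finite \<Rightarrow> real) \<Rightarrow> bool" where
  "poly_deg_le k p \<longleftrightarrow> (\<exists>c :: ('n \<Rightarrow> nat) \<Rightarrow> real.
      p = (\<lambda>x. \<Sum>\<alpha>\<in>monoms k. c \<alpha> * (\<Prod>i\<in>UNIV. (x $ i) ^ \<alpha> i)))"

definition determines :: "(real^'n::finite) set \<Rightarrow> real^'n \<Rightarrow> nat \<Rightarrow> bool" where
  "determines S t k \<longleftrightarrow>
     (\<forall>p. poly_deg_le k p \<longrightarrow> (\<forall>s\<in>S. p s = 0) \<longrightarrow> p t = 0)"

definition deg_to_eq :: "(real^'n::finite) set \<Rightarrow> real^'n \<Rightarrow> nat \<Rightarrow> bool" where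
  "deg_to_eq S t k \<longleftrightarrow> determines S t k \<and> (\<forall>m. determines S t m \<longrightarrow> m \<le> k)"

definition box_vertices :: "real^'n::finite \<Rightarrow> real^'n \<Rightarrow> (real^'n) set" where
  "box_vertices a b = {x. \<forall>i. x $ i = a $ i \<or> x $ i = b $ i}"

end

theory Submission
  imports Defs
begin

text \<open>Label the vertices of the box by the sets \<open>W\<close> of coordinates at which they take the upper
  bound, and let \<open>U\<close> consist of the vertices with \<open>card W \<le> k\<close>. A polynomial of degree at most
  \<open>k\<close> has vanishing \<open>(k+1)\<close>-st finite differences along the edges of the box, since every monomial
  misses one of any \<open>k+1\<close> coordinates; so its values on \<open>U\<close> determine, by induction on \<open>card W\<close>,
  its values at all vertices. Conversely, for a vertex with \<open>card T > k\<close> and any \<open>R \<subseteq> T\<close> with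
  \<open>card R = k+1\<close>, the polynomial \<open>\<Prod>i\<in>R. x\<^sub>i - a\<^sub>i\<close> of degree \<open>k+1\<close> vanishes on \<open>U\<close> but not
  at that vertex.\<close>

definition box_vertex :: "real^'n::finite \<Rightarrow> real^'n \<Rightarrow> 'n set \<Rightarrow> real^'n" where
  "box_vertex a b W = (\<chi> i. if i \<in> W then b $ i else a $ i)"

lemma box_vertices_eq_range: "box_vertices a b = range (box_vertex a b)"
proof
  show "box_vertices a b \<subseteq> range (box_vertex a b)"
  proof
    fix x assume "x \<in> box_vertices a b"
    then have "x = box_vertex a b {i. x $ i = b $ i}"
      by (auto simp: box_vertices_def box_vertex_def vec_eq_iff)
    then show "x \<in> range (box_vertex a b)" by blast
  qed
qed (auto simp: box_vertices_def box_vertex_def)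

lemma inj_box_vertex:
  assumes "\<And>i. a $ i \<noteq> b $ i"
  shows "inj (box_vertex a b)"
proof (rule injI)
  fix W W' assume eq: "box_vertex a b W = box_vertex a b W'"
  show "W = W'"
  proof (rule set_eqI)
    fix i
    have "box_vertex a b W $ i = box_vertex a b W' $ i" using eq by simp
    then show "i \<in> W \<longleftrightarrow> i \<in> W'"
      using assms[of i] by (auto simp: box_vertex_def split: if_splits)
  qed
qed

lemma card_subsets_card_le:
  assumes "finite A"
  shows "card {W. W \<subseteq> A \<and> card W \<le> k} = (\<Sum>i=0..k. card A choose i)"
proof -
  have "{W. W \<subseteq> A \<and> card W \<le> k} = (\<Union>i\<in>{0..k}. {W. W \<subseteq> A \<and> card W = i})" by auto
  also have "card \<dots> = (\<Sum>i=0..k. card {W. W \<subseteq> A \<and> card W = i})"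
    by (rule card_UN_disjoint) (auto intro: finite_subset[of _ "Pow A"] assms)
  also have "\<dots> = (\<Sum>i=0..k. card A choose i)"
    using n_subsets[OF assms] by simp
  finally show ?thesis .
qed

lemma sum_Pow_alternating_eq_0:
  fixes g :: "'a set \<Rightarrow> 'b::comm_ring_1"
  assumes "finite R" "j \<in> R" "\<And>S. S \<subseteq> R - {j} \<Longrightarrow> g (insert j S) = g S"
  shows "(\<Sum>S\<in>Pow R. (-1) ^ card (R - S) * g S) = 0"
proof -
  define R' where "R' = R - {j}"
  have R: "R = insert j R'" "j \<notin> R'" "finite R'" using assms R'_def by auto
  have "(\<Sum>S\<in>Pow R. (-1) ^ card (R - S) * g S)
      = (\<Sum>S\<in>Pow R'. (-1) ^ card (R - S) * g S)
        + (\<Sum>S\<in>insert j ` Pow R'. (-1) ^ card (R - S) * g S)"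
    unfolding R(1) Pow_insert by (rule sum.union_disjoint) (use R in auto)
  also have "(\<Sum>S\<in>insert j ` Pow R'. (-1) ^ card (R - S) * g S)
      = (\<Sum>S\<in>Pow R'. (-1) ^ card (R - insert j S) * g (insert j S))"
    using R by (subst sum.reindex) (auto intro!: inj_onI)
  also have "\<dots> = (\<Sum>S\<in>Pow R'. - ((-1) ^ card (R - S) * g S))"
  proof (rule sum.cong)
    fix S assume "S \<in> Pow R'"
    then have S: "S \<subseteq> R'" by auto
    have "R - insert j S = R' - S" "R - S = insert j (R' - S)" using R S by auto
    moreover have "g (insert j S) = g S" using S unfolding R'_def by (rule assms(3))
    ultimately show "(-1) ^ card (R - insert j S) * g (insert j S) = - ((-1) ^ card (R - S) * g S)"
      using R(2,3) by simp
  qed simp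
  finally show ?thesis by (simp add: sum_negf)
qed

lemma finite_monoms: "finite (monoms m :: ('n::finite \<Rightarrow> nat) set)"
proof (rule finite_subset)
  show "monoms m \<subseteq> (\<Pi>\<^sub>E i\<in>(UNIV::'n set). {0..m})"
  proof
    fix \<alpha> :: "'n \<Rightarrow> nat" assume "\<alpha> \<in> monoms m"
    then have "\<alpha> i \<le> m" for i
      using member_le_sum[of i UNIV \<alpha>] by (simp add: monoms_def)
    then show "\<alpha> \<in> (\<Pi>\<^sub>E i\<in>(UNIV::'n set). {0..m})" by auto
  qed
qed (rule finite_PiE, auto)

lemma monoms_exponent_eq_0:
  assumes "\<alpha> \<in> monoms k" "k < card R"
  shows "\<exists>j\<in>R. \<alpha> j = 0"
proof (rule ccontr)
  assume "\<not> ?thesis"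
  then have "card R \<le> (\<Sum>j\<in>R. \<alpha> j)"
    using sum_mono[of R "\<lambda>_. 1::nat" \<alpha>] by (auto simp: Suc_le_eq)
  also have "\<dots> \<le> (\<Sum>j\<in>UNIV. \<alpha> j)" by (rule sum_mono2) auto
  also have "\<dots> \<le> k" using assms(1) by (simp add: monoms_def)
  finally show False using assms(2) by simp
qed

lemma poly_deg_le_finite_difference:
  assumes "poly_deg_le k p" "k < card R"
  shows "(\<Sum>S\<in>Pow R. (-1) ^ card (R - S) * p (box_vertex a b (B \<union> S))) = 0"
proof -
  obtain c where p: "p = (\<lambda>x. \<Sum>\<alpha>\<in>monoms k. c \<alpha> * (\<Prod>i\<in>UNIV. (x $ i) ^ \<alpha> i))"
    using assms(1) unfolding poly_deg_le_def by blast
  have monomial: "(\<Sum>S\<in>Pow R. (-1) ^ card (R - S) * (\<Prod>i\<in>UNIV. (box_vertex a b (B \<union> S) $ i) ^ \<alpha> i)) = 0"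
    if \<alpha>: "\<alpha> \<in> monoms k" for \<alpha>
  proof -
    obtain j where j: "j \<in> R" "\<alpha> j = 0" using monoms_exponent_eq_0[OF \<alpha> assms(2)] by blast
    show ?thesis
      by (rule sum_Pow_alternating_eq_0[OF finite j(1)], rule prod.cong)
         (auto simp: box_vertex_def j(2))
  qed
  have "(\<Sum>S\<in>Pow R. (-1) ^ card (R - S) * p (box_vertex a b (B \<union> S)))
     = (\<Sum>S\<in>Pow R. \<Sum>\<alpha>\<in>monoms k. c \<alpha> * ((-1) ^ card (R - S) * (\<Prod>i\<in>UNIV. (box_vertex a b (B \<union> S) $ i) ^ \<alpha> i)))"
    unfolding p by (simp add: sum_distrib_left mult.left_commute)
  also have "\<dots> = (\<Sum>\<alpha>\<in>monoms k. c \<alpha> * (\<Sum>S\<in>Pow R. (-1) ^ card (R - S) * (\<Prod>i\<in>UNIV. (box_vertex a b (B \<union> S) $ i) ^ \<alpha> i)))"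
    by (subst sum.swap) (simp add: sum_distrib_left)
  finally show ?thesis using monomial by simp
qed

lemma poly_deg_le_vanishes_at_box_vertex:
  assumes "poly_deg_le k p" "\<And>W. card W \<le> k \<Longrightarrow> p (box_vertex a b W) = 0"
  shows "p (box_vertex a b T) = 0"
proof (induction "card T" arbitrary: T rule: less_induct)
  case less
  show ?case
  proof (cases "card T \<le> k")
    case True
    then show ?thesis by (rule assms(2))
  next
    case False
    then obtain R where R: "R \<subseteq> T" "card R = k + 1"
      using obtain_subset_with_card_n[of "k + 1" T] by auto
    define B where "B = T - R"
    have T: "T = B \<union> R" using R B_def by auto
    have smaller: "p (box_vertex a b (B \<union> S)) = 0" if "S \<in> Pow R - {R}" for S
    proof (rule less.hyps)
      show "card (B \<union> S) < card T"
        by (rule psubset_card_mono) (use that R B_def in auto)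
    qed
    have "0 = (\<Sum>S\<in>Pow R. (-1) ^ card (R - S) * p (box_vertex a b (B \<union> S)))"
      by (rule sym, rule poly_deg_le_finite_difference[OF assms(1)]) (simp add: R(2))
    also have "\<dots> = (-1) ^ card (R - R) * p (box_vertex a b (B \<union> R))
        + (\<Sum>S\<in>Pow R - {R}. (-1) ^ card (R - S) * p (box_vertex a b (B \<union> S)))"
      by (rule sum.remove) auto
    also have "\<dots> = p (box_vertex a b T)"
      using smaller by (simp add: T)
    finally show ?thesis by simp
  qed
qed

lemma poly_deg_le_prod_sub:
  fixes c :: "real^'n::finite"
  assumes "card R \<le> m"
  shows "poly_deg_le m (\<lambda>x. \<Prod>i\<in>R. x $ i - c $ i)"
proof -
  let ?ind = "\<lambda>S i. of_bool (i \<in> S) :: nat"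
  define d where "d \<alpha> = (if \<alpha> \<in> ?ind ` Pow R then (\<Prod>i\<in>R - {i. \<alpha> i \<noteq> 0}. - c $ i) else 0)" for \<alpha>
  have inj: "inj_on ?ind (Pow R)"
    by (rule inj_onI) (metis (full_types) of_bool_eq_iff set_eqI)
  have sub: "?ind ` Pow R \<subseteq> monoms m"
  proof
    fix \<alpha> assume "\<alpha> \<in> ?ind ` Pow R"
    then obtain S where S: "S \<subseteq> R" "\<alpha> = ?ind S" by auto
    have "(\<Sum>i\<in>UNIV. ?ind S i) = card S" by (simp add: sum.If_cases)
    also have "\<dots> \<le> card R" using S by (simp add: card_mono)
    finally show "\<alpha> \<in> monoms m" using S assms by (simp add: monoms_def)
  qed
  have d_ind: "d (?ind S) = (\<Prod>i\<in>R - S. - c $ i)" if "S \<subseteq> R" for S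
    using that by (auto simp: d_def)
  have monomial_ind: "(\<Prod>i\<in>UNIV. (x $ i) ^ ?ind S i) = (\<Prod>i\<in>S. x $ i)" for x :: "real^'n" and S
  proof -
    have "(\<Prod>i\<in>UNIV. (x $ i) ^ ?ind S i) = (\<Prod>i\<in>UNIV. if i \<in> S then x $ i else 1)"
      by (rule prod.cong) auto
    then show ?thesis by (simp add: prod.If_cases)
  qed
  have "(\<Prod>i\<in>R. x $ i - c $ i) = (\<Sum>\<alpha>\<in>monoms m. d \<alpha> * (\<Prod>i\<in>UNIV. (x $ i) ^ \<alpha> i))" for x
  proof -
    have "(\<Prod>i\<in>R. x $ i - c $ i) = (\<Sum>S\<in>Pow R. (\<Prod>i\<in>S. x $ i) * (\<Prod>i\<in>R - S. - c $ i))"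
      using prod_add[of R "\<lambda>i. x $ i" "\<lambda>i. - c $ i"] by simp
    also have "\<dots> = (\<Sum>S\<in>Pow R. d (?ind S) * (\<Prod>i\<in>UNIV. (x $ i) ^ ?ind S i))"
      by (rule sum.cong) (simp_all add: d_ind monomial_ind)
    also have "\<dots> = (\<Sum>\<alpha>\<in>monoms m. d \<alpha> * (\<Prod>i\<in>UNIV. (x $ i) ^ \<alpha> i))"
      by (subst sum.reindex[OF inj, unfolded comp_def, symmetric],
          rule sum.mono_neutral_left[OF finite_monoms sub]) (auto simp: d_def)
    finally show ?thesis .
  qed
  then show ?thesis unfolding poly_deg_le_def by blast
qed

lemma determines_box_vertex_from_low_vertices:
  "determines (box_vertex a b ` {W. card W \<le> k}) (box_vertex a b T) k"
  unfolding determines_def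
  using poly_deg_le_vanishes_at_box_vertex by blast

lemma not_determines_box_vertex_above_degree:
  assumes "\<And>i. a $ i \<noteq> b $ i" "k < card T" "k < m"
  shows "\<not> determines (box_vertex a b ` {W. card W \<le> k}) (box_vertex a b T) m"
proof -
  obtain R where R: "R \<subseteq> T" "card R = k + 1"
    using obtain_subset_with_card_n[of "k + 1" T] assms(2) by auto
  define p where "p = (\<lambda>x::real^_. \<Prod>i\<in>R. x $ i - a $ i)"
  have "poly_deg_le m p" unfolding p_def by (rule poly_deg_le_prod_sub) (use R assms(3) in simp)
  moreover have "p (box_vertex a b W) = 0" if "card W \<le> k" for W
  proof -
    have "\<not> R \<subseteq> W" using card_mono[of W R] that R by auto
    then show ?thesis by (auto simp: p_def box_vertex_def)
  qed
  moreover have "p (box_vertex a b T) \<noteq> 0"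
    using R by (auto simp: p_def box_vertex_def assms(1)[symmetric])
  ultimately show ?thesis unfolding determines_def by blast
qed

theorem theorem2:
  fixes a b :: "real^'n::finite" and k :: nat
  assumes "\<forall>i. a $ i < b $ i"
    and "k < CARD('n)"
  shows "\<exists>U. U \<subseteq> box_vertices a b \<and>
             card U = (\<Sum>i=0..k. CARD('n) choose i) \<and>
             (\<forall>v \<in> box_vertices a b - U. deg_to_eq U v k)"
proof -
  have ab: "a $ i \<noteq> b $ i" for i using assms(1) by (metis less_irrefl)
  define U where "U = box_vertex a b ` {W. card W \<le> k}"
  have "card U = card {W::'n set. W \<subseteq> UNIV \<and> card W \<le> k}"
    unfolding U_def by (simp add: card_image inj_on_subset[OF inj_box_vertex[OF ab]])
  then have "card U = (\<Sum>i=0..k. CARD('n) choose i)"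
    by (simp only: card_subsets_card_le[OF finite_class.finite_UNIV])
  moreover have "deg_to_eq U v k" if v_in: "v \<in> box_vertices a b - U" for v
  proof -
    obtain T where v: "v = box_vertex a b T"
      using v_in unfolding box_vertices_eq_range by blast
    have "k < card T"
      using v_in by (auto simp: v U_def)
    then show ?thesis
      unfolding deg_to_eq_def U_def v
      using determines_box_vertex_from_low_vertices[of a b k T]
        not_determines_box_vertex_above_degree[OF ab \<open>k < card T\<close>]
      by (auto simp: not_less[symmetric])
  qed
  ultimately show ?thesis
    by (intro exI[of _ U]) (auto simp: U_def box_vertices_eq_range)
qed

end
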